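(* Let $m\ge n$, let $\Gamma$ be a subset of $M_{m\times n}(\mathbb{C})$, and let $\Gamma_d$ be the set of all matrices in $\Gamma$ whose singular values are distinct. Suppose that for any two matrices $A,B\in\Gamma$ there exists a polynomial $p(x)=\sum_{i=0}^{k}A_i x^i$ with $A_i\in M_{m\times n}(\mathbb{C})$, considered on $[0,1]$, such that $p(0)=A$, $p(1)=B$ and $p([0,1])\subset\Gamma$. Then $\Gamma_d$ is dense in $\Gamma$ if and only if the closure $\overline{\Gamma}$ contains a matrix whose singular values are distinct.
   Context: $M_{m\times n}(\mathbb{C})$ denotes the set of $m\times n$ complex matrices with the topology induced by the Frobenius norm; throughout $m\ge n$. The singular values of $A\in M_{m\times n}(\mathbb{C})$ are the $n$ nonnegative square roots of the eigenvalues of $A^{\ast}A$, counted with multiplicity; they are distinct if these $n$ values are pairwise different. *)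

theory Defs
  imports "HOL-Analysis.Analysis" "HOL-Computational_Algebra.Computational_Algebra"
begin

text \<open>m x n complex matrices are rendered as complex^'n^'m (rows indexed by 'm).
  The norm on this type is the Frobenius norm.\<close>

definition adjoint_mat :: "complex^'n^'m \<Rightarrow> complex^'m^'n" where
  "adjoint_mat A = (\<chi> i j. cnj (A $ j $ i))"

definition charpoly_mat :: "complex^'n^'n \<Rightarrow> complex poly" where
  "charpoly_mat B = det (\<chi> i j. (if i = j then [:0, 1:] else 0) - [:B $ i $ j:])"

definition singular_values :: "complex^'n^'m \<Rightarrow> real multiset" where
  "singular_values A =
     image_mset (\<lambda>z. sqrt (Re z)) (proots (charpoly_mat (adjoint_mat A ** A)))"

definition distinct_singular_values :: "complex^'n^'m \<Rightarrow> bool" where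
  "distinct_singular_values A \<longleftrightarrow> (\<forall>x. count (singular_values A) x \<le> 1)"

end

theory Submission
  imports Defs "HOL-Computational_Algebra.Field_as_Ring" "Subresultants.Subresultant_Gcd"
begin

text \<open>
  The eigenvalues of \<open>A\<^sup>* A\<close> are real and nonnegative, so \<open>A\<close> has distinct singular
  values iff the characteristic polynomial of \<open>A\<^sup>* A\<close> is squarefree, i.e. iff the
  resultant \<open>\<Delta>(A)\<close> (\<open>gram_discriminant A\<close>) of that polynomial and its derivative
  does not vanish. \<open>\<Delta>\<close> is a polynomial in the entries of \<open>A\<close> and their conjugates.
  Hence it is continuous, so the matrices with distinct singular values form an open set,
  and one of them lies in \<open>\<Gamma>\<close> as soon as one lies in its closure. Along a polynomial
  path \<open>p\<close> in \<open>\<Gamma>\<close> from any \<open>B\<close> to such a matrix, \<open>\<Delta>(p(t))\<close> is a nonzero polynomial in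
  the real parameter \<open>t\<close>, so it has only finitely many zeros and \<open>B = p(0)\<close> is a limit
  of matrices \<open>p(t)\<close> in \<open>\<Gamma>\<close> with distinct singular values.
\<close>

no_notation Matrix.vec_index (infixl "$" 100)
no_notation fps_nth (infixl "$" 75)

text \<open>
  Rather than expanding \<open>\<Delta>\<close> into an explicit polynomial, we show that it belongs to every
  set of functions that contains the entries and their conjugates and is closed under the
  pointwise ring operations; continuous functions and polynomials in a real parameter are two
  such sets.
\<close>

locale function_ring =
  fixes R :: "('x \<Rightarrow> 'a::comm_ring_1) set"
  assumes const_in [intro]: "(\<lambda>x. c) \<in> R"
    and add_in [intro]: "f \<in> R \<Longrightarrow> g \<in> R \<Longrightarrow> (\<lambda>x. f x + g x) \<in> R"
    and mult_in [intro]: "f \<in> R \<Longrightarrow> g \<in> R \<Longrightarrow> (\<lambda>x. f x * g x) \<in> R"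
begin

lemma diff_in:
  assumes "f \<in> R" "g \<in> R"
  shows "(\<lambda>x. f x - g x) \<in> R"
  using add_in[OF assms(1) mult_in[OF const_in[of "- 1"] assms(2)]] by simp

lemma sum_in: "(\<And>i. i \<in> I \<Longrightarrow> f i \<in> R) \<Longrightarrow> (\<lambda>x. \<Sum>i\<in>I. f i x) \<in> R"
  by (induction I rule: infinite_finite_induct) auto

lemma prod_in: "(\<And>i. i \<in> I \<Longrightarrow> f i \<in> R) \<Longrightarrow> (\<lambda>x. \<Prod>i\<in>I. f i x) \<in> R"
  by (induction I rule: infinite_finite_induct) auto

lemma det_in:
  assumes "\<And>i j. (\<lambda>x. N x $ i $ j) \<in> R"
  shows "(\<lambda>x. Determinants.det (N x)) \<in> R"
  unfolding Determinants.det_def by (intro sum_in mult_in const_in prod_in assms)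

lemma det_mat_in:
  assumes "\<And>x. N x \<in> carrier_mat n n"
    and "\<And>i j. i < n \<Longrightarrow> j < n \<Longrightarrow> (\<lambda>x. N x $$ (i, j)) \<in> R"
  shows "(\<lambda>x. Determinant.det (N x)) \<in> R"
  unfolding det_def'[OF assms(1)]
  by (intro sum_in mult_in const_in prod_in assms(2)) (auto simp: permutes_in_image)

lemma resultant_sub_in:
  assumes "\<And>k. (\<lambda>x. coeff (p x) k) \<in> R" and "\<And>k. (\<lambda>x. coeff (q x) k) \<in> R"
  shows "(\<lambda>x. resultant_sub m n (p x) (q x)) \<in> R"
  unfolding resultant_sub_def
proof (rule det_mat_in[OF sylvester_mat_sub_carrier])
  have if_in: "(\<lambda>x. if b then f x else g x) \<in> R" if "f \<in> R" "g \<in> R" for b f g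
    using that by (cases b) simp_all
  fix i j assume "i < m + n" "j < m + n"
  then show "(\<lambda>x. sylvester_mat_sub m n (p x) (q x) $$ (i, j)) \<in> R"
    by (simp add: sylvester_mat_sub_index) (intro if_in const_in assms)
qed

end

definition coeffwise :: "('x \<Rightarrow> 'a::zero) set \<Rightarrow> ('x \<Rightarrow> 'a poly) set" where
  "coeffwise R = {F. \<forall>k. (\<lambda>x. coeff (F x) k) \<in> R}"

lemma (in function_ring) function_ring_coeffwise: "function_ring (coeffwise R)"
proof
  show "(\<lambda>x. c) \<in> coeffwise R" for c
    by (simp add: coeffwise_def const_in)
next
  fix F G assume "F \<in> coeffwise R" "G \<in> coeffwise R"
  then show "(\<lambda>x. F x + G x) \<in> coeffwise R" and "(\<lambda>x. F x * G x) \<in> coeffwise R"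
    by (auto simp: coeffwise_def coeff_mult intro!: sum_in)
qed

lemma charpoly_mat_coeff_in:
  assumes "function_ring R" and "\<And>i j. (\<lambda>x. B x $ i $ j) \<in> R"
  shows "(\<lambda>x. coeff (charpoly_mat (B x)) k) \<in> R"
proof -
  interpret function_ring R by fact
  interpret P: function_ring "coeffwise R"
    by (rule function_ring_coeffwise)
  have "(\<lambda>x. coeff [:B x $ i $ j:] k) \<in> R" for i j k
    using assms(2) by (cases k) (simp_all add: const_in)
  then have "(\<lambda>x. [:B x $ i $ j:]) \<in> coeffwise R" for i j
    by (simp add: coeffwise_def)
  then have "(\<lambda>x. charpoly_mat (B x)) \<in> coeffwise R"
    unfolding charpoly_mat_def by (intro P.det_in) (simp add: P.diff_in P.const_in)
  then show ?thesis by (simp add: coeffwise_def)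
qed

lemma function_ring_continuous:
  "function_ring {f :: 'x::topological_space \<Rightarrow> complex. continuous_on UNIV f}"
  by unfold_locales (auto intro: continuous_intros)

definition real_poly_funs :: "(real \<Rightarrow> complex) set" where
  "real_poly_funs = {f. \<exists>r. \<forall>t. f t = poly r (of_real t)}"

lemma function_ring_real_poly_funs: "function_ring real_poly_funs"
proof
  show "(\<lambda>t. c) \<in> real_poly_funs" for c
    by (auto simp: real_poly_funs_def intro: exI[of _ "[:c:]"])
next
  fix f g assume "f \<in> real_poly_funs" "g \<in> real_poly_funs"
  then obtain r s where "\<And>t. f t = poly r (of_real t)" "\<And>t. g t = poly s (of_real t)"
    by (auto simp: real_poly_funs_def)
  then show "(\<lambda>t. f t + g t) \<in> real_poly_funs" and "(\<lambda>t. f t * g t) \<in> real_poly_funs"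
    by (auto simp: real_poly_funs_def intro: exI[of _ "r + s"] exI[of _ "r * s"])
qed

lemma poly_charpoly_mat:
  "poly (charpoly_mat B) z = Determinants.det (Finite_Cartesian_Product.mat z - B)"
  unfolding charpoly_mat_def Determinants.det_def
  by (simp add: poly_sum poly_prod Finite_Cartesian_Product.mat_def if_distrib[of "\<lambda>q. poly q z"]
      cong: if_cong)

lemma charpoly_mat_root_imp_eigenvector:
  assumes "poly (charpoly_mat B) z = 0"
  obtains v where "v \<noteq> 0" and "B *v v = z *s v"
proof -
  have "\<not> invertible (Finite_Cartesian_Product.mat z - B)"
    using assms by (simp add: poly_charpoly_mat invertible_det_nz)
  then obtain v where "v \<noteq> 0" "(Finite_Cartesian_Product.mat z - B) *v v = 0"
    using invertible_left_inverse matrix_left_invertible_ker by metis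
  moreover have "Finite_Cartesian_Product.mat z *v v = z *s v"
    by (simp add: Finite_Cartesian_Product.vec_eq_iff matrix_vector_mult_def
        Finite_Cartesian_Product.mat_def if_distrib[of "\<lambda>a. a * _"] cong: if_cong)
  ultimately show thesis
    by (intro that[of v]) (simp_all add: matrix_vector_mult_diff_rdistrib)
qed

lemma degree_charpoly_mat: "degree (charpoly_mat (B :: complex^'n^'n)) = CARD('n)"
proof -
  define N :: "complex poly^'n^'n"
    where "N = (\<chi> i j. (if i = j then [:0, 1:] else 0) - [:B $ i $ j:])"
  define T where "T p = of_int (sign p) * (\<Prod>i\<in>UNIV. N $ i $ p i)" for p :: "'n \<Rightarrow> 'n"
  define S where "S = {p. p permutes (UNIV :: 'n set)}"
  have "id \<in> S" unfolding S_def by (simp add: permutes_id)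
  then have charpoly: "charpoly_mat B = T id + (\<Sum>p\<in>S - {id}. T p)"
    unfolding charpoly_mat_def Determinants.det_def
      N_def[symmetric] T_def[symmetric] S_def[symmetric]
    by (simp add: sum.remove S_def finite_permutations)
  have "degree (T id) = CARD('n)"
    unfolding T_def N_def by (simp add: degree_prod_sum_eq)
  moreover have "degree (T p) < CARD('n)" if "p \<noteq> id" for p
  proof -
    have "degree (T p) \<le> (\<Sum>i\<in>UNIV. degree (N $ i $ p i))"
      unfolding T_def using degree_mult_le[of "of_int (sign p)" "\<Prod>i\<in>UNIV. N $ i $ p i"]
        degree_prod_sum_le[of UNIV "\<lambda>i. N $ i $ p i"] by simp
    also have "\<dots> \<le> (\<Sum>i\<in>UNIV. if p i = i then 1 else 0)"
      unfolding N_def by (intro sum_mono) (auto intro: order_trans[OF degree_diff_le])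
    also have "\<dots> = card {i. p i = i}"
      by (simp add: sum.If_cases)
    also have "\<dots> < CARD('n)"
      using that by (intro psubset_card_mono) (auto simp: fun_eq_iff)
    finally show ?thesis .
  qed
  then have "degree (\<Sum>p\<in>S - {id}. T p) < CARD('n)"
    by (intro degree_sum_less) auto
  ultimately show ?thesis
    unfolding charpoly by (simp add: degree_add_eq_left)
qed

lemma charpoly_mat_nonzero: "charpoly_mat B \<noteq> 0"
  using degree_charpoly_mat[of B] by auto

abbreviation gram :: "complex^'n^'m \<Rightarrow> complex^'n^'n" where
  "gram A \<equiv> adjoint_mat A ** A"

lemma cnj_dot_adjoint_mat:
  "(\<Sum>i\<in>UNIV. cnj (v $ i) * (adjoint_mat A *v w) $ i) = (\<Sum>k\<in>UNIV. cnj ((A *v v) $ k) * w $ k)"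
proof -
  have "(\<Sum>i\<in>UNIV. cnj (v $ i) * (adjoint_mat A *v w) $ i)
      = (\<Sum>i\<in>UNIV. \<Sum>k\<in>UNIV. cnj (A $ k $ i * v $ i) * w $ k)"
    by (simp add: adjoint_mat_def matrix_vector_mult_def sum_distrib_left mult_ac)
  also have "\<dots> = (\<Sum>k\<in>UNIV. \<Sum>i\<in>UNIV. cnj (A $ k $ i * v $ i) * w $ k)"
    by (rule sum.swap)
  also have "\<dots> = (\<Sum>k\<in>UNIV. cnj ((A *v v) $ k) * w $ k)"
    by (simp add: matrix_vector_mult_def cnj_sum sum_distrib_right)
  finally show ?thesis .
qed

lemma cnj_dot_self: "(\<Sum>i\<in>UNIV. cnj (v $ i) * v $ i) = of_real (norm v ^ 2)"
proof -
  have "cnj (v $ i) * v $ i = of_real (norm (v $ i) ^ 2)" for i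
    by (metis complex_norm_square mult.commute)
  moreover have "norm v ^ 2 = (\<Sum>i\<in>UNIV. norm (v $ i) ^ 2)"
    by (simp add: norm_vec_def L2_set_def sum_nonneg)
  ultimately show ?thesis
    by (simp only: of_real_sum)
qed

lemma gram_eigenvalue:
  assumes "gram A *v v = z *s v" and "v \<noteq> 0"
  shows "z = of_real (norm (A *v v) ^ 2 / norm v ^ 2)"
proof -
  have "z * of_real (norm v ^ 2) = (\<Sum>i\<in>UNIV. cnj (v $ i) * (gram A *v v) $ i)"
    unfolding assms(1) cnj_dot_self[symmetric] by (simp add: sum_distrib_left mult_ac)
  also have "\<dots> = of_real (norm (A *v v) ^ 2)"
    by (simp add: matrix_vector_mul_assoc[symmetric] cnj_dot_adjoint_mat cnj_dot_self)
  finally show ?thesis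
    using assms(2) by (simp add: eq_divide_eq)
qed

lemma charpoly_gram_root_nonneg_real:
  assumes "poly (charpoly_mat (gram A)) z = 0"
  obtains s where "s \<ge> 0" and "z = of_real s"
proof -
  obtain v where "v \<noteq> 0" and "gram A *v v = z *s v"
    using assms by (rule charpoly_mat_root_imp_eigenvector)
  then have "z = of_real (norm (A *v v) ^ 2 / norm v ^ 2)"
    by (intro gram_eigenvalue)
  then show thesis
    by (rule that[rotated]) simp
qed

lemma count_image_mset_le_1_iff:
  assumes "inj_on f (set_mset M)"
  shows "(\<forall>y. count (image_mset f M) y \<le> 1) \<longleftrightarrow> (\<forall>x. count M x \<le> 1)"
proof -
  have image: "count (image_mset f M) (f x) = count M x" if "x \<in># M" for x
  proof -
    have "f -` {f x} \<inter> set_mset M = {x}"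
      using assms that by (auto dest: inj_onD)
    then show ?thesis by (simp add: count_image_mset)
  qed
  show ?thesis
  proof (intro iffI allI)
    fix x assume le: "\<forall>y. count (image_mset f M) y \<le> 1"
    show "count M x \<le> 1"
    proof (cases "x \<in># M")
      case True
      then show ?thesis using le image by metis
    qed (simp add: not_in_iff)
  next
    fix y assume le: "\<forall>x. count M x \<le> 1"
    show "count (image_mset f M) y \<le> 1"
    proof (cases "y \<in># image_mset f M")
      case True
      then obtain x where "x \<in># M" and "y = f x" by auto
      then show ?thesis using le image by simp
    next
      case False
      then show ?thesis by (simp only: not_in_iff)
    qed
  qed
qed

lemma rsquarefree_iff_count_proots_le_1:
  assumes "p \<noteq> 0"
  shows "rsquarefree p \<longleftrightarrow> (\<forall>x. count (proots p) x \<le> 1)"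
  using assms by (auto simp: rsquarefree_def le_Suc_eq)

lemma distinct_singular_values_iff_rsquarefree:
  "distinct_singular_values A \<longleftrightarrow> rsquarefree (charpoly_mat (gram A))"
proof -
  note nonzero = charpoly_mat_nonzero[of "gram A"]
  have inj: "inj_on (\<lambda>z. sqrt (Re z)) (set_mset (proots (charpoly_mat (gram A))))"
    using nonzero by (intro inj_onI) (auto elim!: charpoly_gram_root_nonneg_real)
  then show ?thesis
    unfolding distinct_singular_values_def singular_values_def count_image_mset_le_1_iff[OF inj]
      rsquarefree_iff_count_proots_le_1[OF nonzero] by simp
qed

lemma degree_gcd_pos_iff_common_root:
  fixes p q :: "complex poly"
  assumes "p \<noteq> 0"
  shows "degree (gcd p q) \<noteq> 0 \<longleftrightarrow> (\<exists>z. poly p z = 0 \<and> poly q z = 0)"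
proof
  assume "degree (gcd p q) \<noteq> 0"
  then have "\<not> constant (poly (gcd p q))"
    by (simp add: constant_degree)
  then obtain z where "poly (gcd p q) z = 0"
    using fundamental_theorem_of_algebra by blast
  then have "[:-z, 1:] dvd p" and "[:-z, 1:] dvd q"
    by (auto simp: poly_eq_0_iff_dvd intro: dvd_trans)
  then show "\<exists>z. poly p z = 0 \<and> poly q z = 0"
    by (auto simp: poly_eq_0_iff_dvd)
next
  assume "\<exists>z. poly p z = 0 \<and> poly q z = 0"
  then obtain z where "[:-z, 1:] dvd gcd p q"
    by (auto simp: poly_eq_0_iff_dvd)
  moreover have "gcd p q \<noteq> 0"
    using assms by simp
  ultimately show "degree (gcd p q) \<noteq> 0"
    using dvd_imp_degree[of "[:-z, 1:]" "gcd p q"] by simp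
qed

lemma resultant_pderiv_eq_0_iff:
  fixes p :: "complex poly"
  assumes "p \<noteq> 0"
  shows "resultant p (pderiv p) = 0 \<longleftrightarrow> \<not> rsquarefree p"
  unfolding resultant_0_gcd degree_gcd_pos_iff_common_root[OF assms] rsquarefree_roots by blast

text \<open>Up to sign, the discriminant of the characteristic polynomial of \<open>A\<^sup>* A\<close>.\<close>

definition gram_discriminant :: "complex^'n^'m \<Rightarrow> complex" where
  "gram_discriminant A = resultant (charpoly_mat (gram A)) (pderiv (charpoly_mat (gram A)))"

lemma distinct_singular_values_iff_discriminant:
  "distinct_singular_values A \<longleftrightarrow> gram_discriminant A \<noteq> 0"
  by (simp add: distinct_singular_values_iff_rsquarefree gram_discriminant_def
      resultant_pderiv_eq_0_iff[OF charpoly_mat_nonzero])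

text \<open>With the degrees fixed, the Sylvester matrix has the same shape for every \<open>A\<close>.\<close>

lemma gram_discriminant_eq_resultant_sub:
  "gram_discriminant (A :: complex^'n^'m) = resultant_sub CARD('n) (CARD('n) - 1)
     (charpoly_mat (gram A)) (pderiv (charpoly_mat (gram A)))"
  by (simp add: gram_discriminant_def resultant_sub degree_charpoly_mat degree_pderiv)

lemma gram_discriminant_in:
  fixes a :: "'x \<Rightarrow> complex^'n^'m"
  assumes "function_ring R"
    and "\<And>i j. (\<lambda>x. a x $ i $ j) \<in> R" and "\<And>i j. (\<lambda>x. cnj (a x $ i $ j)) \<in> R"
  shows "(\<lambda>x. gram_discriminant (a x)) \<in> R"
proof -
  interpret function_ring R by fact
  have "(\<lambda>x. gram (a x) $ i $ j) \<in> R" for i j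
    by (simp add: adjoint_mat_def matrix_matrix_mult_def) (intro sum_in mult_in assms(2,3))
  then have coeff: "(\<lambda>x. coeff (charpoly_mat (gram (a x))) k) \<in> R" for k
    by (rule charpoly_mat_coeff_in[OF assms(1)])
  then have "(\<lambda>x. coeff (pderiv (charpoly_mat (gram (a x)))) k) \<in> R" for k
    by (simp add: coeff_pderiv) (intro mult_in const_in coeff)
  with coeff show ?thesis
    unfolding gram_discriminant_eq_resultant_sub by (intro resultant_sub_in)
qed

lemma continuous_gram_discriminant:
  "continuous_on UNIV (gram_discriminant :: complex^'n^'m \<Rightarrow> complex)"
  using gram_discriminant_in[OF function_ring_continuous, of "\<lambda>A. A"]
  by (simp add: continuous_on_component continuous_on_cnj continuous_on_id)

lemma open_distinct_singular_values: "open {A :: complex^'n^'m. distinct_singular_values A}"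
  unfolding distinct_singular_values_iff_discriminant
  by (rule open_Collect_neq[OF continuous_gram_discriminant continuous_on_const])

lemma gram_discriminant_along_poly_path:
  fixes C :: "nat \<Rightarrow> complex^'n^'m"
  shows "(\<lambda>t. gram_discriminant (\<Sum>i\<le>k. (t ^ i) *\<^sub>R C i)) \<in> real_poly_funs"
proof -
  interpret function_ring real_poly_funs
    by (rule function_ring_real_poly_funs)
  have monom: "(\<lambda>t. of_real t ^ i * c) \<in> real_poly_funs" for i c
    unfolding real_poly_funs_def
    by (rule CollectI, rule exI[of _ "Polynomial.monom c i"]) (simp add: poly_monom)
  show ?thesis
    by (rule gram_discriminant_in[OF function_ring_real_poly_funs];
        simp only: sum_component vector_scaleR_component cnj_sum;
        simp only: scaleR_conv_of_real complex_cnj_mult complex_cnj_power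
          complex_cnj_complex_of_real of_real_power;
        intro sum_in monom)
qed

lemma poly_of_real_nonzero_near_0:
  fixes r :: "complex poly"
  assumes "r \<noteq> 0" and "e > 0"
  obtains t where "0 < t" and "t < e" and "poly r (of_real t) \<noteq> 0"
proof -
  have "finite {t :: real. poly r (of_real t) = 0}"
    using finite_vimageI[OF poly_roots_finite[OF assms(1)] inj_of_real] by (simp add: vimage_def)
  moreover have "infinite {0<..<e}"
    using assms(2) by (simp add: infinite_Ioo)
  ultimately have "infinite ({0<..<e} - {t. poly r (of_real t) = 0})"
    by (rule Diff_infinite_finite)
  then obtain t where "t \<in> {0<..<e} - {t. poly r (of_real t) = 0}"
    using infinite_imp_nonempty by blast
  then show thesis
    by (intro that) auto
qed

lemma poly_path_start_in_closure:
  fixes C :: "nat \<Rightarrow> complex^'n^'m" and k :: nat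
  defines "p \<equiv> \<lambda>t::real. \<Sum>i\<le>k. (t ^ i) *\<^sub>R C i"
  assumes "p ` {0..1} \<subseteq> \<Gamma>" and "distinct_singular_values (p 1)"
  shows "p 0 \<in> closure {A \<in> \<Gamma>. distinct_singular_values A}"
  unfolding closure_approachable
proof (intro allI impI)
  fix e :: real assume "e > 0"
  obtain r where r: "\<And>t. gram_discriminant (p t) = poly r (of_real t)"
    using gram_discriminant_along_poly_path[of C k] unfolding p_def real_poly_funs_def by blast
  have "r \<noteq> 0"
    using assms(3) r[of 1] by (auto simp: distinct_singular_values_iff_discriminant)
  have "isCont p 0"
    unfolding p_def by (intro continuous_intros)
  then obtain d where "d > 0" and d: "\<And>t. dist t 0 < d \<Longrightarrow> dist (p t) (p 0) < e"
    using \<open>e > 0\<close> unfolding continuous_at_eps_delta by blast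
  obtain t where "0 < t" "t < min d 1" "poly r (of_real t) \<noteq> 0"
    using poly_of_real_nonzero_near_0[OF \<open>r \<noteq> 0\<close>, of "min d 1"] \<open>d > 0\<close> by auto
  then have "p t \<in> {A \<in> \<Gamma>. distinct_singular_values A}"
    using assms(2) r[of t] by (auto simp: distinct_singular_values_iff_discriminant)
  moreover have "dist (p t) (p 0) < e"
    using \<open>0 < t\<close> \<open>t < min d 1\<close> d[of t] by auto
  ultimately show "\<exists>A \<in> {A \<in> \<Gamma>. distinct_singular_values A}. dist A (p 0) < e"
    by blast
qed

theorem theorem3p16:
  fixes \<Gamma> :: "(complex^'n^'m) set"
  assumes mn: "CARD('n) \<le> CARD('m)"
    and nonempty: "\<Gamma> \<noteq> {}"
    and polyconn: "\<And>A B. A \<in> \<Gamma> \<Longrightarrow> B \<in> \<Gamma> \<Longrightarrow>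
       \<exists>(k::nat) (C :: nat \<Rightarrow> complex^'n^'m).
          (let p = (\<lambda>t::real. \<Sum>i\<le>k. (t ^ i) *\<^sub>R C i) in
             p 0 = A \<and> p 1 = B \<and> (\<forall>t\<in>{0..1}. p t \<in> \<Gamma>))"
  shows "\<Gamma> \<subseteq> closure {A \<in> \<Gamma>. distinct_singular_values A} \<longleftrightarrow>
         (\<exists>A \<in> closure \<Gamma>. distinct_singular_values A)"
proof
  assume "\<Gamma> \<subseteq> closure {A \<in> \<Gamma>. distinct_singular_values A}"
  with nonempty have "{A \<in> \<Gamma>. distinct_singular_values A} \<noteq> {}"
    by (metis closure_empty subset_empty)
  then show "\<exists>A \<in> closure \<Gamma>. distinct_singular_values A"
    using closure_subset by blast
next
  assume "\<exists>A \<in> closure \<Gamma>. distinct_singular_values A"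
  then obtain A where A: "A \<in> \<Gamma>" "distinct_singular_values A"
    using open_Int_closure_eq_empty[OF open_distinct_singular_values, of \<Gamma>] by blast
  show "\<Gamma> \<subseteq> closure {A \<in> \<Gamma>. distinct_singular_values A}"
  proof
    fix B assume "B \<in> \<Gamma>"
    then obtain k C where "(\<Sum>i\<le>k. (0 ^ i) *\<^sub>R C i) = B" and "(\<Sum>i\<le>k. (1 ^ i) *\<^sub>R C i) = A"
      and "\<forall>t\<in>{0..1}. (\<Sum>i\<le>k. (t ^ i) *\<^sub>R C i) \<in> \<Gamma>"
      using polyconn[OF _ A(1)] unfolding Let_def by blast
    with A(2) show "B \<in> closure {A \<in> \<Gamma>. distinct_singular_values A}"
      using poly_path_start_in_closure[of C k \<Gamma>] by auto
  qed
qed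

end
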